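(* Let $\pi_3=2\int_0^1\frac{\mathrm{d}t}{\sqrt{1-t^6}}$ and let $\mathrm{sleaf}_3:\mathbb{R}\to\mathbb{R}$ be the leaf function of basis $3$. Let $m$ be an integer, $l$ real, $s=\mathrm{sleaf}_3(l)$, and $$A=\frac12\sqrt{-1-s^2+2s^4+\frac{2-2s^6}{\sqrt{1+s^2+s^4}}}.$$ (i) If $\frac{\pi_3}{2}(4m-1)\le l\le\frac{\pi_3}{2}(4m+1)$, then $\Bigl(\mathrm{sleaf}_3\Bigl(\frac l2\Bigr)\Bigr)^2=-\frac12 s^2+\frac12\sqrt{1+s^2+s^4}-A$. (ii) If $\frac{\pi_3}{2}(4m+1)\le l\le\frac{\pi_3}{2}(4m+3)$, then $\Bigl(\mathrm{sleaf}_3\Bigl(\frac l2\Bigr)\Bigr)^2=-\frac12 s^2+\frac12\sqrt{1+s^2+s^4}+A$.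
   Context: For a natural number $n$, the leaf function $\mathrm{sleaf}_n:\mathbb{R}\to\mathbb{R}$ is the solution of $\frac{\mathrm{d}^2r}{\mathrm{d}l^2}=-n\,r^{2n-1}$ with $r(0)=0$, $r'(0)=1$; it is periodic with period $2\pi_n$, where $\pi_n=2\int_0^1\frac{\mathrm{d}t}{\sqrt{1-t^{2n}}}$, and on $[-\pi_n/2,\pi_n/2]$ it is the inverse of $r\mapsto\int_0^r\frac{\mathrm{d}t}{\sqrt{1-t^{2n}}}$. *)

theory Defs
  imports "HOL-Analysis.Analysis"
begin

text \<open>The constant pi_n = 2 * int_0^1 dt / sqrt(1 - t^(2n)) (an improper but
  Henstock--Kurzweil/Lebesgue integrable integrand).\<close>
definition leaf_pi :: "nat \<Rightarrow> real" where
  "leaf_pi n = 2 * integral {0..1} (\<lambda>t. 1 / sqrt (1 - t ^ (2 * n)))"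

definition sleaf :: "nat \<Rightarrow> real \<Rightarrow> real" where
  "sleaf n = (THE r. \<exists>r'. (\<forall>x. (r has_real_derivative r' x) (at x)
                      \<and> (r' has_real_derivative (- real n * r x ^ (2 * n - 1))) (at x))
                   \<and> r 0 = 0 \<and> r' 0 = 1)"

end

theory Submission
  imports Defs
begin

(* sleaf_n is constructed explicitly. On [-1,1] the map r |-> int_0^r (1 - t^(2n))^(-1/2) dt
   increases from -pi_n/2 to pi_n/2; composing its inverse with a triangle wave of amplitude
   pi_n/2 and period 2 pi_n gives a solution of the initial value problem, differentiable also at
   the turning points because there the derivative is the limit of the derivatives nearby.
   Solutions satisfy the energy identity r'^2 + r^(2n) = 1, so they stay in [-1,1], where
   r^(2n-1) is Lipschitz, and a Gronwall argument shows uniqueness.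

   Uniqueness also yields the duplication formula for n = 3: with u = sleaf_3 (l/2) and
   c = sleaf_3' (l/2), the values sleaf_3 l and sleaf_3' l are 2 u c / sqrt (1 + 8 u^6) and
   (1 - 20 u^6 - 8 u^12) / (1 + 8 u^6)^(3/2). For X = u^2, Y = (sleaf_3 l)^2 and
   R = sqrt (1 + Y + Y^2) this gives Y (1 + 8 X^3) = 4 X (1 - X^3); the radicand in A becomes
   (2X + Y - R)^2, and 2X + Y <= R holds exactly when 1 - 20 X^3 - 8 X^6 >= 0, i.e. when
   sleaf_3' l >= 0. On the two intervals of the theorem sleaf_3' l is >= 0 and <= 0
   respectively, which selects the sign of A. *)

section \<open>Uniqueness for the leaf differential equation\<close>

lemma gronwall_zero:
  fixes W W' :: "real \<Rightarrow> real"
  assumes deriv: "\<And>y. (W has_real_derivative W' y) (at y)"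
    and bound: "\<And>y. \<bar>W' y\<bar> \<le> L * W y"
    and nonneg: "\<And>y. 0 \<le> W y" and "W 0 = 0"
  shows "W x = 0"
proof -
  have "W x * exp (- L * \<bar>x\<bar>) \<le> W 0"
  proof (cases "0 \<le> x")
    case True
    have "W x * exp (- L * x) \<le> W 0 * exp (- L * 0)"
    proof (rule DERIV_nonpos_imp_nonincreasing[OF True])
      fix y
      have "((\<lambda>y. W y * exp (- L * y)) has_real_derivative (W' y - L * W y) * exp (- L * y)) (at y)"
        by (auto intro!: derivative_eq_intros deriv simp: algebra_simps)
      moreover have "(W' y - L * W y) * exp (- L * y) \<le> 0"
        using bound[of y] by (simp add: mult_nonpos_nonneg)
      ultimately show "\<exists>z. ((\<lambda>y. W y * exp (- L * y)) has_real_derivative z) (at y) \<and> z \<le> 0"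
        by blast
    qed
    with True show ?thesis by simp
  next
    case False
    have "W x * exp (L * x) \<le> W 0 * exp (L * 0)"
    proof (rule DERIV_nonneg_imp_nondecreasing[of x 0])
      show "x \<le> 0" using False by simp
      fix y
      have "((\<lambda>y. W y * exp (L * y)) has_real_derivative (W' y + L * W y) * exp (L * y)) (at y)"
        by (auto intro!: derivative_eq_intros deriv simp: algebra_simps)
      moreover have "0 \<le> (W' y + L * W y) * exp (L * y)"
        using bound[of y] by simp
      ultimately show "\<exists>z. ((\<lambda>y. W y * exp (L * y)) has_real_derivative z) (at y) \<and> 0 \<le> z"
        by blast
    qed
    with False show ?thesis by simp
  qed
  then show ?thesis
    using nonneg[of x] \<open>W 0 = 0\<close> by (simp add: mult_le_0_iff)
qed

definition leaf_ode :: "nat \<Rightarrow> (real \<Rightarrow> real) \<Rightarrow> (real \<Rightarrow> real) \<Rightarrow> bool" where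
  "leaf_ode n r p \<longleftrightarrow>
     (\<forall>x. (r has_real_derivative p x) (at x)
        \<and> (p has_real_derivative - real n * r x ^ (2 * n - 1)) (at x))
     \<and> r 0 = 0 \<and> p 0 = 1"

lemma leaf_ode_energy:
  assumes "0 < n" and "leaf_ode n r p"
  shows "p x ^ 2 + r x ^ (2 * n) = 1"
proof -
  have "((\<lambda>x. p x ^ 2 + r x ^ (2 * n)) has_real_derivative 0) (at y)" for y
  proof -
    have "(r has_real_derivative p y) (at y)"
      and "(p has_real_derivative - real n * r y ^ (2 * n - 1)) (at y)"
      using assms(2) by (auto simp: leaf_ode_def)
    from DERIV_add[OF DERIV_power[OF this(2), of 2] DERIV_power[OF this(1), of "2 * n"]]
    show ?thesis by (simp add: mult.commute mult.left_commute)
  qed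
  then have "p x ^ 2 + r x ^ (2 * n) = p 0 ^ 2 + r 0 ^ (2 * n)"
    by (intro DERIV_isconst_all) auto
  with assms show ?thesis
    by (simp add: leaf_ode_def)
qed

lemma leaf_ode_bounded:
  assumes "0 < n" and "leaf_ode n r p"
  shows "\<bar>r x\<bar> \<le> 1"
proof -
  have "\<bar>r x\<bar> ^ (2 * n) \<le> 1"
    using leaf_ode_energy[OF assms, of x]
    by (simp add: power_abs[symmetric] power_even_abs) (smt (verit) zero_le_power2)
  with assms(1) show ?thesis by (simp add: power_le_one_iff)
qed

lemma leaf_ode_unique:
  assumes "0 < n" and sol1: "leaf_ode n r1 p1" and sol2: "leaf_ode n r2 p2"
  shows "r1 = r2" and "p1 = p2"
proof -
  define k where "k = 2 * n - 1"
  define L where "L = 1 + real n * real k"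
  define W where "W x = (r1 x - r2 x)^2 + (p1 x - p2 x)^2" for x
  define W' where
    "W' x = 2 * (r1 x - r2 x) * (p1 x - p2 x)
      - 2 * real n * (p1 x - p2 x) * (r1 x ^ k - r2 x ^ k)" for x
  have deriv: "(W has_real_derivative W' y) (at y)" for y
    using sol1 sol2 unfolding leaf_ode_def W_def W'_def k_def
    by (auto intro!: derivative_eq_intros simp: algebra_simps)
  have bound: "\<bar>W' y\<bar> \<le> L * W y" for y
  proof -
    define d e where "d = r1 y - r2 y" and "e = p1 y - p2 y"
    have lip: "\<bar>r1 y ^ k - r2 y ^ k\<bar> \<le> real k * \<bar>d\<bar>"
      using norm_power_diff[of "r1 y" "r2 y" k] leaf_ode_bounded[OF assms(1)] sol1 sol2
      by (simp add: d_def)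
    have "\<bar>W' y\<bar> = \<bar>2 * d * e - 2 * real n * e * (r1 y ^ k - r2 y ^ k)\<bar>"
      by (simp add: W'_def d_def e_def)
    also have "\<dots> \<le> 2 * \<bar>d\<bar> * \<bar>e\<bar> + 2 * real n * \<bar>e\<bar> * \<bar>r1 y ^ k - r2 y ^ k\<bar>"
      by (rule order_trans[OF abs_triangle_ineq4]) (simp add: abs_mult)
    also have "\<dots> \<le> 2 * \<bar>d\<bar> * \<bar>e\<bar> + 2 * real n * \<bar>e\<bar> * (real k * \<bar>d\<bar>)"
      using lip by (intro add_left_mono mult_left_mono) auto
    also have "\<dots> = L * (2 * \<bar>d\<bar> * \<bar>e\<bar>)"
      by (simp add: L_def distrib_right)
    also have "\<dots> \<le> L * W y"
    proof (rule mult_left_mono)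
      have "0 \<le> (\<bar>d\<bar> - \<bar>e\<bar>)\<^sup>2" by simp
      then show "2 * \<bar>d\<bar> * \<bar>e\<bar> \<le> W y"
        by (simp add: W_def d_def[symmetric] e_def[symmetric] power2_diff)
    qed (simp add: L_def)
    finally show ?thesis .
  qed
  have "W 0 = 0"
    using sol1 sol2 by (simp add: W_def leaf_ode_def)
  from gronwall_zero[OF deriv bound _ this] have "W x = 0" for x
    by (simp add: W_def)
  then show "r1 = r2" and "p1 = p2"
    by (auto simp: W_def add_nonneg_eq_0_iff fun_eq_iff)
qed

lemma leaf_ode_rescale:
  fixes c :: real
  assumes "c \<noteq> 0"
    and r': "\<And>t. (r has_real_derivative c * p t) (at t)"
    and p': "\<And>t. (p has_real_derivative - c * real n * r t ^ (2 * n - 1)) (at t)"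
    and "r 0 = 0" and "p 0 = 1"
  shows "leaf_ode n (\<lambda>x. r (x / c)) (\<lambda>x. p (x / c))"
proof -
  have scale: "((\<lambda>x. x / c) has_real_derivative 1 / c) (at x)" for x
    using \<open>c \<noteq> 0\<close> by (auto intro!: derivative_eq_intros)
  show ?thesis
    unfolding leaf_ode_def
  proof (intro conjI allI)
    fix x
    show "((\<lambda>x. r (x / c)) has_real_derivative p (x / c)) (at x)"
      using DERIV_chain2[OF r' scale] \<open>c \<noteq> 0\<close> by simp
    show "((\<lambda>x. p (x / c)) has_real_derivative - real n * r (x / c) ^ (2 * n - 1)) (at x)"
      using DERIV_chain2[OF p' scale] \<open>c \<noteq> 0\<close> by simp
  qed (use assms in simp_all)
qed

lemma sleaf_eqI:
  assumes "0 < n" and "leaf_ode n r p"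
  shows "sleaf n = r"
proof -
  have "sleaf n = (THE r. \<exists>p. leaf_ode n r p)"
    by (simp add: sleaf_def leaf_ode_def)
  also have "\<dots> = r"
    using assms leaf_ode_unique(1) by blast
  finally show ?thesis .
qed

section \<open>Construction of the leaf functions\<close>

lemma has_real_derivative_at_from_limit:
  fixes f g :: "real \<Rightarrow> real"
  assumes "isCont f a" and "isCont g a"
    and "\<forall>\<^sub>F y in at a. (f has_real_derivative g y) (at y)"
  shows "(f has_real_derivative g a) (at a)"
  unfolding has_field_derivative_iff
proof (rule lhopital)
  show "((\<lambda>y. f y - f a) \<longlongrightarrow> 0) (at a)"
    using assms(1) by (simp add: isCont_def LIM_zero)
  show "((\<lambda>y. y - a) \<longlongrightarrow> 0) (at a)"
    by (intro tendsto_eq_intros) auto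
  show "\<forall>\<^sub>F y in at a. y - a \<noteq> 0"
    by (simp add: eventually_at_filter)
  show "\<forall>\<^sub>F y in at a. ((\<lambda>y. f y - f a) has_real_derivative g y) (at y)"
    using assms(3) by eventually_elim (auto intro!: derivative_eq_intros)
  show "\<forall>\<^sub>F y in at a. ((\<lambda>y. y - a) has_real_derivative 1) (at y)"
    by (intro always_eventually allI) (auto intro!: derivative_eq_intros)
  show "((\<lambda>y. g y / 1) \<longlongrightarrow> g a) (at a)"
    using assms(2) by (simp add: isCont_def)
qed simp

lemma abs_sin_less_1_iff: "\<bar>sin t\<bar> < 1 \<longleftrightarrow> cos t \<noteq> 0" for t :: real
proof -
  have "(sin t)\<^sup>2 = 1 - (cos t)\<^sup>2" by (simp add: sin_squared_eq)
  then show ?thesis by (simp flip: abs_square_less_1)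
qed

lemma cos_zero_eq_of_dist_less_pi:
  fixes t u :: real
  assumes "cos t = 0" and "cos u = 0" and "\<bar>t - u\<bar> < pi"
  shows "t = u"
proof -
  have "sin (t - u) = 0"
    using assms by (simp add: sin_diff)
  with assms(3) show ?thesis
    using sin_eq_0_pi[of "t - u"] by auto
qed

lemma cos_nonneg_near_2pi_multiple:
  fixes t :: real and m :: int
  assumes "\<bar>t - 2 * pi * m\<bar> \<le> pi / 2"
  shows "0 \<le> cos t"
proof -
  have "0 \<le> cos (t - 2 * pi * m)"
    using assms unfolding abs_le_iff by (intro cos_ge_zero) linarith+
  also have "cos (t - 2 * pi * m) = cos t"
    by (simp add: cos_diff)
  finally show ?thesis .
qed

lemma cos_nonpos_near_odd_pi_multiple:
  fixes t :: real and m :: int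
  assumes "\<bar>t - (2 * m + 1) * pi\<bar> \<le> pi / 2"
  shows "cos t \<le> 0"
proof -
  have "0 \<le> cos (t - pi)"
    using assms by (intro cos_nonneg_near_2pi_multiple[of _ m]) (simp add: algebra_simps)
  then show ?thesis
    by (simp add: cos_diff)
qed

locale leaf_basis =
  fixes n :: nat
  assumes n_pos: "0 < n"
begin

definition integrand :: "real \<Rightarrow> real" where
  "integrand t = 1 / sqrt (1 - t ^ (2 * n))"

definition K :: real where
  "K = leaf_pi n / 2"

lemma integrand_minus [simp]: "integrand (- t) = integrand t"
  by (simp add: integrand_def)

lemma integrand_pos:
  assumes "\<bar>t\<bar> < 1"
  shows "0 < integrand t"
proof -
  have "\<bar>t\<bar> ^ (2 * n) < 1"
    using assms n_pos by (simp add: power_less_one_iff)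
  then show ?thesis
    by (simp add: integrand_def power_abs[symmetric] power_even_abs)
qed

lemma integrable_integrand: "integrand integrable_on {0..1}"
proof (rule measurable_bounded_by_integrable_imp_integrable)
  have "integrand \<in> borel_measurable borel"
    unfolding integrand_def by measurable
  moreover have "(\<lambda>t::real. t) \<in> borel_measurable (lebesgue_on {0..1})"
    by (rule continuous_imp_measurable_on_sets_lebesgue) (auto intro: continuous_intros)
  ultimately show "integrand \<in> borel_measurable (lebesgue_on {0..1})"
    using measurable_compose by (simp add: o_def)
  have "((\<lambda>t. 1 / sqrt (1 - t)) has_integral - 2 * sqrt (1 - 1) - (- 2 * sqrt (1 - 0))) {0..1::real}"
    by (rule fundamental_theorem_of_calculus_interior)
       (auto intro!: continuous_intros derivative_eq_intros
             simp: has_real_derivative_iff_has_vector_derivative[symmetric] field_simps)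
  then show "(\<lambda>t. 1 / sqrt (1 - t)) integrable_on {0..1::real}"
    by blast
  fix t :: real
  assume t: "t \<in> {0..1}"
  show "norm (integrand t) \<le> 1 / sqrt (1 - t)"
  proof (cases "t = 1")
    case False
    with t have "t ^ (2 * n) \<le> t ^ 1"
      using n_pos by (intro power_decreasing) auto
    with t False show ?thesis
      by (auto simp: integrand_def intro!: frac_le real_sqrt_le_mono)
  qed (simp add: integrand_def)
qed auto

lemma integrand_has_integral_0_1: "(integrand has_integral K) {0..1}"
  using integrable_integrand
  by (simp add: K_def leaf_pi_def integrand_def[abs_def] has_integral_integral)

lemma integrand_has_integral_m1_0: "(integrand has_integral K) {-1..0}"
  using has_integral_reflect_real[of integrand K 1 0] integrand_has_integral_0_1 by simp

lemma integrand_has_integral_m1_1: "(integrand has_integral 2 * K) {-1..1}"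
  using has_integral_combine[OF _ _ integrand_has_integral_m1_0 integrand_has_integral_0_1]
  by simp

(* For r in [-1,1] this is the integral from 0 to r; starting at -1 avoids integrals over
   reversed intervals. *)
definition arcsleaf :: "real \<Rightarrow> real" where
  "arcsleaf r = integral {-1..r} integrand - K"

lemma continuous_on_arcsleaf: "continuous_on {-1..1} arcsleaf"
  unfolding arcsleaf_def
  by (intro continuous_intros indefinite_integral_continuous_1)
     (use integrand_has_integral_m1_1 in blast)

lemma arcsleaf_has_real_derivative:
  assumes "\<bar>r\<bar> < 1"
  shows "(arcsleaf has_real_derivative integrand r) (at r)"
proof -
  have "continuous (at r) integrand"
    using integrand_pos[OF assms] unfolding integrand_def
    by (intro continuous_intros) auto
  then have "((\<lambda>u. integral {-1..u} integrand) has_vector_derivative integrand r) (at r within {-1..1})"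
    using assms integrand_has_integral_m1_1
    by (intro integral_has_vector_derivative_continuous_at[where S = "{}", simplified])
       (auto intro: continuous_at_imp_continuous_within)
  moreover have "at r within {-1..1} = at r"
    using assms by (intro at_within_interior) auto
  ultimately have "((\<lambda>u. integral {-1..u} integrand) has_real_derivative integrand r) (at r)"
    by (simp add: has_real_derivative_iff_has_vector_derivative)
  then show ?thesis
    unfolding arcsleaf_def[abs_def] by (auto intro!: derivative_eq_intros)
qed

lemma strict_mono_on_arcsleaf: "strict_mono_on {-1..1} arcsleaf"
proof (rule strict_mono_onI)
  fix a b :: real
  assume ab: "a \<in> {-1..1}" "b \<in> {-1..1}" "a < b"
  show "arcsleaf a < arcsleaf b"
  proof (rule DERIV_pos_imp_increasing_open[OF \<open>a < b\<close>])
    fix x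
    assume "a < x" "x < b"
    with ab have "\<bar>x\<bar> < 1" by auto
    then show "\<exists>y. (arcsleaf has_real_derivative y) (at x) \<and> 0 < y"
      using arcsleaf_has_real_derivative integrand_pos by blast
  next
    show "continuous_on {a..b} arcsleaf"
      using ab by (auto intro: continuous_on_subset[OF continuous_on_arcsleaf])
  qed
qed

lemma arcsleaf_m1 [simp]: "arcsleaf (-1) = - K"
  by (simp add: arcsleaf_def)

lemma arcsleaf_0 [simp]: "arcsleaf 0 = 0"
  using integrand_has_integral_m1_0 by (simp add: arcsleaf_def integral_unique)

lemma arcsleaf_1 [simp]: "arcsleaf 1 = K"
  using integrand_has_integral_m1_1 by (simp add: arcsleaf_def integral_unique)

lemma K_pos: "0 < K"
  using strict_mono_onD[OF strict_mono_on_arcsleaf, of 0 1] by simp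

lemma arcsleaf_image: "arcsleaf ` {-1..1} = {-K..K}"
proof
  show "arcsleaf ` {-1..1} \<subseteq> {-K..K}"
  proof safe
    fix r :: real
    assume "r \<in> {-1..1}"
    then show "arcsleaf r \<in> {-K..K}"
      using strict_mono_on_leD[OF strict_mono_on_arcsleaf, of "-1" r]
        strict_mono_on_leD[OF strict_mono_on_arcsleaf, of r 1] by auto
  qed
  show "{-K..K} \<subseteq> arcsleaf ` {-1..1}"
    using IVT'[of arcsleaf "-1" _ 1] continuous_on_arcsleaf by force
qed

definition arcsleaf_inv :: "real \<Rightarrow> real" where
  "arcsleaf_inv = the_inv_into {-1..1} arcsleaf"

lemma inj_on_arcsleaf: "inj_on arcsleaf {-1..1}"
  by (rule strict_mono_on_imp_inj_on[OF strict_mono_on_arcsleaf])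

lemma arcsleaf_inv_arcsleaf: "r \<in> {-1..1} \<Longrightarrow> arcsleaf_inv (arcsleaf r) = r"
  unfolding arcsleaf_inv_def by (rule the_inv_into_f_f[OF inj_on_arcsleaf])

lemma arcsleaf_inv_in: "y \<in> {-K..K} \<Longrightarrow> arcsleaf_inv y \<in> {-1..1}"
  unfolding arcsleaf_inv_def using the_inv_into_into[OF inj_on_arcsleaf] arcsleaf_image by blast

lemma arcsleaf_arcsleaf_inv: "y \<in> {-K..K} \<Longrightarrow> arcsleaf (arcsleaf_inv y) = y"
  unfolding arcsleaf_inv_def using f_the_inv_into_f[OF inj_on_arcsleaf] arcsleaf_image by blast

lemma arcsleaf_inv_less_1:
  assumes "\<bar>y\<bar> < K"
  shows "\<bar>arcsleaf_inv y\<bar> < 1"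
proof -
  have "y \<in> {-K..K}" using assms by auto
  then have "arcsleaf_inv y \<noteq> 1" "arcsleaf_inv y \<noteq> -1"
    using arcsleaf_arcsleaf_inv[of y] assms by auto
  with arcsleaf_inv_in[OF \<open>y \<in> {-K..K}\<close>] show ?thesis by auto
qed

lemma continuous_on_arcsleaf_inv: "continuous_on {-K..K} arcsleaf_inv"
  using continuous_on_inv_into[OF continuous_on_arcsleaf _ inj_on_arcsleaf]
  by (simp add: arcsleaf_image arcsleaf_inv_def)

lemma arcsleaf_inv_has_real_derivative:
  assumes "\<bar>y\<bar> < K"
  shows "(arcsleaf_inv has_real_derivative sqrt (1 - arcsleaf_inv y ^ (2 * n))) (at y)"
proof -
  have y: "-K < y" "y < K" using assms by auto
  have "(arcsleaf_inv has_real_derivative inverse (integrand (arcsleaf_inv y))) (at y)"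
  proof (rule DERIV_inverse_function[OF _ _ y])
    show "(arcsleaf has_real_derivative integrand (arcsleaf_inv y)) (at (arcsleaf_inv y))"
      using arcsleaf_has_real_derivative arcsleaf_inv_less_1 assms by blast
    show "integrand (arcsleaf_inv y) \<noteq> 0"
      using integrand_pos[OF arcsleaf_inv_less_1[OF assms]] by simp
    show "arcsleaf (arcsleaf_inv z) = z" if "-K < z" "z < K" for z
      using that by (simp add: arcsleaf_arcsleaf_inv)
    show "isCont arcsleaf_inv y"
      using continuous_on_interior[OF continuous_on_arcsleaf_inv] y by auto
  qed
  then show ?thesis
    by (simp add: integrand_def)
qed

(* triangle_wave runs through [-K,K] with slope +1 or -1 and has period 4K = 2 pi_n; composed
   with the inverse of arcsleaf it continues sleaf_n beyond [-K,K]. Its slope, the sign of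
   cos (phase x), is the sign of the derivative. *)
definition phase :: "real \<Rightarrow> real" where
  "phase x = pi * x / (2 * K)"

definition triangle_wave :: "real \<Rightarrow> real" where
  "triangle_wave x = 2 * K / pi * arcsin (sin (phase x))"

definition sleaf_model :: "real \<Rightarrow> real" where
  "sleaf_model x = arcsleaf_inv (triangle_wave x)"

definition dsleaf :: "real \<Rightarrow> real" where
  "dsleaf x = sgn (cos (phase x)) * sqrt (1 - sleaf_model x ^ (2 * n))"

lemma abs_triangle_wave: "\<bar>triangle_wave x\<bar> = 2 * K / pi * \<bar>arcsin (sin (phase x))\<bar>"
  using K_pos by (simp add: triangle_wave_def abs_mult)

lemma triangle_wave_in: "triangle_wave x \<in> {-K..K}"
proof -
  have "\<bar>arcsin (sin (phase x))\<bar> \<le> pi / 2"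
    using arcsin_bounded[of "sin (phase x)"] by auto
  then have "\<bar>triangle_wave x\<bar> \<le> 2 * K / pi * (pi / 2)"
    unfolding abs_triangle_wave using K_pos by (intro mult_left_mono) auto
  then show ?thesis
    by auto
qed

lemma abs_triangle_wave_less:
  assumes "cos (phase x) \<noteq> 0"
  shows "\<bar>triangle_wave x\<bar> < K"
proof -
  have "\<bar>sin (phase x)\<bar> < 1"
    using assms abs_sin_less_1_iff by blast
  then have "\<bar>arcsin (sin (phase x))\<bar> < pi / 2"
    using arcsin_lt_bounded[of "sin (phase x)"] by (auto simp: abs_less_iff)
  then have "\<bar>triangle_wave x\<bar> < 2 * K / pi * (pi / 2)"
    unfolding abs_triangle_wave using K_pos by (intro mult_strict_left_mono) auto
  then show ?thesis
    by simp
qed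

lemma sleaf_model_in: "sleaf_model x \<in> {-1..1}"
  unfolding sleaf_model_def by (rule arcsleaf_inv_in[OF triangle_wave_in])

lemma sleaf_model_pow_le_1: "sleaf_model x ^ (2 * n) \<le> 1"
proof -
  have "\<bar>sleaf_model x\<bar> ^ (2 * n) \<le> 1"
    using sleaf_model_in[of x] by (intro power_le_one) auto
  then show ?thesis
    by (simp add: power_even_abs)
qed

lemma abs_sleaf_model_less:
  "cos (phase x) \<noteq> 0 \<Longrightarrow> \<bar>sleaf_model x\<bar> < 1"
  unfolding sleaf_model_def by (intro arcsleaf_inv_less_1 abs_triangle_wave_less)

lemma sleaf_model_pow_eq_1:
  assumes "cos (phase x) = 0"
  shows "sleaf_model x ^ (2 * n) = 1"
proof -
  have "\<bar>sin (phase x)\<bar> = 1"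
    using abs_sin_less_1_iff[of "phase x"] abs_sin_le_one[of "phase x"] assms by linarith
  then have "sin (phase x) = 1 \<or> sin (phase x) = -1"
    by linarith
  then have "triangle_wave x = K \<or> triangle_wave x = - K"
    by (auto simp: triangle_wave_def)
  then have "sleaf_model x = 1 \<or> sleaf_model x = -1"
    using arcsleaf_inv_arcsleaf[of 1] arcsleaf_inv_arcsleaf[of "-1"]
    by (auto simp: sleaf_model_def)
  then show ?thesis
    by auto
qed

lemma isCont_sleaf_model: "isCont sleaf_model x"
proof -
  have "continuous_on UNIV triangle_wave"
    unfolding triangle_wave_def phase_def by (intro continuous_intros) (use K_pos in auto)
  then have "continuous_on UNIV sleaf_model"
    unfolding sleaf_model_def[abs_def]
    by (rule continuous_on_compose2[OF continuous_on_arcsleaf_inv]) (use triangle_wave_in in auto)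
  then show ?thesis
    by (simp add: continuous_on_eq_continuous_at)
qed

lemma sleaf_model_0: "sleaf_model 0 = 0"
  using arcsleaf_inv_arcsleaf[of 0] by (simp add: sleaf_model_def triangle_wave_def phase_def)

lemma dsleaf_0: "dsleaf 0 = 1"
  by (simp add: dsleaf_def sleaf_model_0 phase_def n_pos)

lemma triangle_wave_has_real_derivative:
  assumes "cos (phase x) \<noteq> 0"
  shows "(triangle_wave has_real_derivative sgn (cos (phase x))) (at x)"
proof -
  have sin: "\<bar>sin (phase x)\<bar> < 1"
    using assms abs_sin_less_1_iff by blast
  have "sqrt (1 - (sin (phase x))\<^sup>2) = \<bar>cos (phase x)\<bar>"
    by (simp add: cos_squared_eq[symmetric])
  moreover have "(triangle_wave has_real_derivative
      2 * K / pi * (inverse (sqrt (1 - (sin (phase x))\<^sup>2)) * (cos (phase x) * (pi / (2 * K))))) (at x)"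
    using sin unfolding triangle_wave_def[abs_def] phase_def
    by (auto intro!: derivative_eq_intros DERIV_arcsin simp: abs_less_iff)
  ultimately show ?thesis
    using K_pos assms by (simp add: real_sgn_eq field_simps)
qed

lemma sleaf_model_has_real_derivative_regular:
  assumes "cos (phase x) \<noteq> 0"
  shows "(sleaf_model has_real_derivative dsleaf x) (at x)"
  using DERIV_chain2[OF arcsleaf_inv_has_real_derivative[OF abs_triangle_wave_less[OF assms]]
      triangle_wave_has_real_derivative[OF assms]]
  by (simp add: sleaf_model_def[abs_def] dsleaf_def mult.commute)

lemma dsleaf_has_real_derivative_regular:
  assumes "cos (phase x) \<noteq> 0"
  shows "(dsleaf has_real_derivative - real n * sleaf_model x ^ (2 * n - 1)) (at x)"
proof -
  define \<sigma> where "\<sigma> = sgn (cos (phase x))"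
  define U where "U = {y. 0 < \<sigma> * cos (phase y)}"
  have "((\<lambda>y. \<sigma> * sqrt (1 - sleaf_model y ^ (2 * n))) has_real_derivative
      - real n * sleaf_model x ^ (2 * n - 1)) (at x)"
  proof -
    have "\<bar>sleaf_model x\<bar> ^ (2 * n) < 1"
      using abs_sleaf_model_less[OF assms] n_pos by (simp add: power_less_one_iff)
    then have pos: "0 < 1 - sleaf_model x ^ (2 * n)"
      by (simp add: power_even_abs)
    have "((\<lambda>y. \<sigma> * sqrt (1 - sleaf_model y ^ (2 * n))) has_real_derivative
        \<sigma> * (inverse (sqrt (1 - sleaf_model x ^ (2 * n))) / 2
             * - (real (2 * n) * (dsleaf x * sleaf_model x ^ (2 * n - 1))))) (at x)"
      using pos by (auto intro!: derivative_eq_intros sleaf_model_has_real_derivative_regular[OF assms])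
    moreover have "dsleaf x = \<sigma> * sqrt (1 - sleaf_model x ^ (2 * n))"
      and "\<sigma> * (\<sigma> * t) = t" for t
      using assms by (auto simp: dsleaf_def \<sigma>_def sgn_real_def)
    ultimately show ?thesis
      using pos n_pos by (simp add: field_simps)
  qed
  moreover have "open U"
    unfolding U_def phase_def
    by (intro open_Collect_less continuous_intros) (use K_pos in auto)
  moreover have "x \<in> U"
    using assms by (auto simp: U_def \<sigma>_def sgn_real_def)
  moreover have "\<sigma> * sqrt (1 - sleaf_model y ^ (2 * n)) = dsleaf y" if "y \<in> U" for y
  proof -
    have "sgn (cos (phase y)) = \<sigma>"
      using that assms by (cases "0 < cos (phase x)") (auto simp: U_def \<sigma>_def)
    then show ?thesis
      by (simp add: dsleaf_def)
  qed
  ultimately show ?thesis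
    by (rule has_field_derivative_transform_within_open)
qed

lemma cos_phase_zero_isolated:
  assumes "cos (phase a) = 0"
  shows "\<forall>\<^sub>F y in at a. cos (phase y) \<noteq> 0"
  unfolding eventually_at
proof (intro exI conjI ballI impI)
  show "0 < 2 * K" using K_pos by simp
  fix y
  assume y: "y \<noteq> a \<and> dist y a < 2 * K"
  have "phase y - phase a = pi / (2 * K) * (y - a)"
    using K_pos by (simp add: phase_def field_simps)
  then have "\<bar>phase y - phase a\<bar> = pi / (2 * K) * \<bar>y - a\<bar>"
    using K_pos by (simp add: abs_mult)
  also have "\<dots> < pi / (2 * K) * (2 * K)"
    using y K_pos by (intro mult_strict_left_mono) (auto simp: dist_real_def)
  finally have "\<bar>phase y - phase a\<bar> < pi"
    using K_pos by simp
  moreover have "phase y \<noteq> phase a"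
    using y K_pos by (auto simp: phase_def)
  ultimately show "cos (phase y) \<noteq> 0"
    using cos_zero_eq_of_dist_less_pi[OF _ assms] by blast
qed

lemma abs_dsleaf_le: "\<bar>dsleaf x\<bar> \<le> sqrt (1 - sleaf_model x ^ (2 * n))"
proof -
  have nonneg: "0 \<le> sqrt (1 - sleaf_model x ^ (2 * n))"
    using sleaf_model_pow_le_1[of x] by (intro real_sqrt_ge_zero) linarith
  then have "\<bar>dsleaf x\<bar> = \<bar>sgn (cos (phase x))\<bar> * sqrt (1 - sleaf_model x ^ (2 * n))"
    by (simp add: dsleaf_def abs_mult)
  also have "\<dots> \<le> 1 * sqrt (1 - sleaf_model x ^ (2 * n))"
    by (intro mult_right_mono nonneg) (simp add: abs_sgn_eq)
  finally show ?thesis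
    by simp
qed

lemma isCont_dsleaf: "isCont dsleaf x"
proof (cases "cos (phase x) = 0")
  case False
  then show ?thesis
    by (rule DERIV_isCont[OF dsleaf_has_real_derivative_regular])
next
  case True
  have "isCont (\<lambda>y. sqrt (1 - sleaf_model y ^ (2 * n))) x"
    by (intro continuous_intros isCont_sleaf_model)
  then have "((\<lambda>y. sqrt (1 - sleaf_model y ^ (2 * n))) \<longlongrightarrow> sqrt (1 - sleaf_model x ^ (2 * n))) (at x)"
    by (rule isContD)
  then have "((\<lambda>y. sqrt (1 - sleaf_model y ^ (2 * n))) \<longlongrightarrow> 0) (at x)"
    by (simp only: sleaf_model_pow_eq_1[OF True] diff_self real_sqrt_zero)
  then have "(dsleaf \<longlongrightarrow> 0) (at x)"
    using abs_dsleaf_le by (intro Lim_null_comparison[OF always_eventually, of dsleaf]) auto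
  moreover have "dsleaf x = 0"
    using True by (simp add: dsleaf_def)
  ultimately show ?thesis
    by (simp add: isCont_def)
qed

(* At the turning points arcsin is not differentiable; there the derivative is obtained as the
   limit of the derivatives nearby. *)
lemma sleaf_model_has_real_derivative: "(sleaf_model has_real_derivative dsleaf x) (at x)"
proof (cases "cos (phase x) = 0")
  case True
  have "\<forall>\<^sub>F y in at x. (sleaf_model has_real_derivative dsleaf y) (at y)"
    using cos_phase_zero_isolated[OF True]
    by eventually_elim (rule sleaf_model_has_real_derivative_regular)
  then show ?thesis
    by (intro has_real_derivative_at_from_limit isCont_sleaf_model isCont_dsleaf)
qed (rule sleaf_model_has_real_derivative_regular)

lemma dsleaf_has_real_derivative:
  "(dsleaf has_real_derivative - real n * sleaf_model x ^ (2 * n - 1)) (at x)"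
proof (cases "cos (phase x) = 0")
  case True
  have "\<forall>\<^sub>F y in at x.
      (dsleaf has_real_derivative - real n * sleaf_model y ^ (2 * n - 1)) (at y)"
    using cos_phase_zero_isolated[OF True]
    by eventually_elim (rule dsleaf_has_real_derivative_regular)
  then show ?thesis
    by (intro has_real_derivative_at_from_limit isCont_dsleaf continuous_intros isCont_sleaf_model)
qed (rule dsleaf_has_real_derivative_regular)

lemma leaf_ode_sleaf_model: "leaf_ode n sleaf_model dsleaf"
  using sleaf_model_has_real_derivative dsleaf_has_real_derivative sleaf_model_0 dsleaf_0
  by (simp add: leaf_ode_def)

lemma sleaf_eq_sleaf_model: "sleaf n = sleaf_model"
  by (rule sleaf_eqI[OF n_pos leaf_ode_sleaf_model])

lemma leaf_ode_sleaf: "leaf_ode n (sleaf n) dsleaf"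
  using leaf_ode_sleaf_model by (simp add: sleaf_eq_sleaf_model)

lemma phase_le_iff: "phase x \<le> phase y \<longleftrightarrow> x \<le> y"
  using K_pos by (simp add: phase_def divide_le_cancel)

lemma dsleaf_nonneg:
  fixes m :: int
  assumes "K * (4 * real_of_int m - 1) \<le> l" and "l \<le> K * (4 * real_of_int m + 1)"
  shows "0 \<le> dsleaf l"
proof -
  have "phase (K * (4 * real_of_int m - 1)) = 2 * pi * m - pi / 2"
    and "phase (K * (4 * real_of_int m + 1)) = 2 * pi * m + pi / 2"
    using K_pos by (simp_all add: phase_def field_simps)
  moreover have "phase (K * (4 * real_of_int m - 1)) \<le> phase l"
    and "phase l \<le> phase (K * (4 * real_of_int m + 1))"
    using assms by (simp_all only: phase_le_iff)
  ultimately have "\<bar>phase l - 2 * pi * m\<bar> \<le> pi / 2"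
    unfolding abs_le_iff by linarith
  then have "0 \<le> cos (phase l)"
    by (rule cos_nonneg_near_2pi_multiple)
  moreover have "0 \<le> sqrt (1 - sleaf_model l ^ (2 * n))"
    using sleaf_model_pow_le_1[of l] by (intro real_sqrt_ge_zero) linarith
  ultimately show ?thesis
    unfolding dsleaf_def by (intro mult_nonneg_nonneg) auto
qed

lemma dsleaf_nonpos:
  fixes m :: int
  assumes "K * (4 * real_of_int m + 1) \<le> l" and "l \<le> K * (4 * real_of_int m + 3)"
  shows "dsleaf l \<le> 0"
proof -
  have "phase (K * (4 * real_of_int m + 1)) = (2 * m + 1) * pi - pi / 2"
    and "phase (K * (4 * real_of_int m + 3)) = (2 * m + 1) * pi + pi / 2"
    using K_pos by (simp_all add: phase_def field_simps)
  moreover have "phase (K * (4 * real_of_int m + 1)) \<le> phase l"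
    and "phase l \<le> phase (K * (4 * real_of_int m + 3))"
    using assms by (simp_all only: phase_le_iff)
  ultimately have "\<bar>phase l - (2 * m + 1) * pi\<bar> \<le> pi / 2"
    unfolding abs_le_iff by linarith
  then have "cos (phase l) \<le> 0"
    by (rule cos_nonpos_near_odd_pi_multiple)
  moreover have "0 \<le> sqrt (1 - sleaf_model l ^ (2 * n))"
    using sleaf_model_pow_le_1[of l] by (intro real_sqrt_ge_zero) linarith
  ultimately show ?thesis
    unfolding dsleaf_def by (intro mult_nonpos_nonneg) auto
qed

end

section \<open>The duplication formula for sleaf 3\<close>

lemma leaf_ode_3_duplication:
  fixes r p :: "real \<Rightarrow> real"
  assumes sol: "leaf_ode 3 r p"
  defines "q \<equiv> \<lambda>t. sqrt (1 + 8 * r t ^ 6)"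
  shows "leaf_ode 3 (\<lambda>x. 2 * r (x / 2) * p (x / 2) / q (x / 2))
                    (\<lambda>x. (1 - 20 * r (x / 2) ^ 6 - 8 * r (x / 2) ^ 12) / q (x / 2) ^ 3)"
proof -
  define D where "D t = 2 * r t * p t / q t" for t
  define E where "E t = (1 - 20 * r t ^ 6 - 8 * r t ^ 12) / q t ^ 3" for t
  have r': "(r has_real_derivative p t) (at t)"
    and p': "(p has_real_derivative - 3 * r t ^ 5) (at t)" for t
    using sol by (simp_all add: leaf_ode_def)
  have c2: "p t ^ 2 = 1 - r t ^ 6" for t
    using leaf_ode_energy[OF _ sol, of t] by simp
  have q2: "q t ^ 2 = 1 + 8 * r t ^ 6" and q_pos: "0 < q t" for t
    by (simp_all add: q_def add_pos_nonneg)
  have q': "(q has_real_derivative 24 * r t ^ 5 * p t / q t) (at t)" for t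
    unfolding q_def using q_pos[of t]
    by (auto intro!: derivative_eq_intros r' simp: q_def field_simps)
  have D': "(D has_real_derivative 2 * E t) (at t)" for t
  proof -
    have "(D has_real_derivative
        ((2 * p t ^ 2 - 6 * r t ^ 6) * q t ^ 2 - 48 * r t ^ 6 * p t ^ 2) / q t ^ 3) (at t)"
      unfolding D_def[abs_def] using q_pos[of t]
      by (auto intro!: derivative_eq_intros r' p' q'
               simp: field_simps power2_eq_square power3_eq_cube eval_nat_numeral)
    moreover have "(2 * p t ^ 2 - 6 * r t ^ 6) * q t ^ 2 - 48 * r t ^ 6 * p t ^ 2
        = 2 * (1 - 20 * r t ^ 6 - 8 * r t ^ 12)"
      by (simp add: c2 q2 algebra_simps)
    ultimately show ?thesis
      by (simp add: E_def)
  qed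
  have E': "(E has_real_derivative - 6 * D t ^ 5) (at t)" for t
  proof -
    define M where "M = (5 + 4 * r t ^ 6) * q t ^ 2 + 3 * (1 - 20 * r t ^ 6 - 8 * r t ^ 12)"
    have deriv: "(E has_real_derivative - 24 * r t ^ 5 * p t * M / q t ^ 5) (at t)"
      unfolding E_def[abs_def] M_def using q_pos[of t]
      by (auto intro!: derivative_eq_intros r' p' q' simp: field_simps eval_nat_numeral)
    have "M = 8 * (p t ^ 2) ^ 2"
      unfolding M_def c2 q2 by algebra
    then have "- 24 * r t ^ 5 * p t * M / q t ^ 5 = - 6 * D t ^ 5"
      by (simp add: D_def power_divide power_mult_distrib eval_nat_numeral)
    with deriv show ?thesis
      by (simp only:)
  qed
  have "leaf_ode 3 (\<lambda>x. D (x / 2)) (\<lambda>x. E (x / 2))"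
  proof (rule leaf_ode_rescale)
    show "(D has_real_derivative 2 * E t) (at t)" for t
      by (rule D')
    show "(E has_real_derivative - 2 * real 3 * D t ^ (2 * 3 - 1)) (at t)" for t
      using E'[of t] by simp
  qed (use sol in \<open>simp_all add: D_def E_def q_def leaf_ode_def\<close>)
  then show ?thesis
    by (simp add: D_def E_def)
qed

lemma leaf3_half_compare:
  fixes X Y R :: real
  assumes X: "0 \<le> X" "X \<le> 1" and Y: "0 \<le> Y" and R: "0 \<le> R"
    and R2: "R\<^sup>2 = 1 + Y + Y\<^sup>2" and Y_eq: "Y * (1 + 8 * X ^ 3) = 4 * X * (1 - X ^ 3)"
  shows "2 * X + Y \<le> R \<longleftrightarrow> 0 \<le> 1 - 20 * X ^ 3 - 8 * X ^ 6"
    and "R \<le> 2 * X + Y \<longleftrightarrow> 1 - 20 * X ^ 3 - 8 * X ^ 6 \<le> 0"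
proof -
  define g where "g = 2 * X\<^sup>2 + 2 * X - 1"
  define a where "a = -1 - 6 * X + 6 * X\<^sup>2 - 8 * X ^ 3"
  define b where "b = -1 - 2 * X - 6 * X\<^sup>2 + 4 * X ^ 3 - 4 * X ^ 4"
  have "X\<^sup>2 \<le> X" and "X ^ 3 \<le> X\<^sup>2"
    using X power_decreasing[of 1 2 X] power_decreasing[of 2 3 X] by simp_all
  moreover have "0 \<le> X ^ 3" and "0 \<le> X ^ 4"
    using X by simp_all
  ultimately have "a < 0" and "b < 0" and Q_pos: "0 < 1 + 8 * X ^ 3"
    using X unfolding a_def b_def by linarith+
  have "((2 * X + Y)\<^sup>2 - R\<^sup>2) * (1 + 8 * X ^ 3)
      = (4 * X - 1) * (Y * (1 + 8 * X ^ 3)) - (1 - 4 * X\<^sup>2) * (1 + 8 * X ^ 3)"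
    unfolding R2 by algebra
  also have "\<dots> = - g * a"
    unfolding Y_eq g_def a_def by algebra
  finally have e_eq: "((2 * X + Y)\<^sup>2 - R\<^sup>2) * (1 + 8 * X ^ 3) = - g * a" .
  have N_eq: "1 - 20 * X ^ 3 - 8 * X ^ 6 = g * b"
    unfolding g_def b_def by algebra
  have "2 * X + Y \<le> R \<longleftrightarrow> (2 * X + Y)\<^sup>2 \<le> R\<^sup>2"
    using X Y R by (simp add: power2_le_iff_abs_le)
  also have "\<dots> \<longleftrightarrow> ((2 * X + Y)\<^sup>2 - R\<^sup>2) * (1 + 8 * X ^ 3) \<le> 0"
    using Q_pos by (simp add: mult_le_0_iff)
  also have "\<dots> \<longleftrightarrow> - g * a \<le> 0"
    unfolding e_eq ..
  also have "\<dots> \<longleftrightarrow> 0 \<le> g * b"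
    using \<open>a < 0\<close> \<open>b < 0\<close> by (simp add: mult_le_0_iff zero_le_mult_iff)
  finally show "2 * X + Y \<le> R \<longleftrightarrow> 0 \<le> 1 - 20 * X ^ 3 - 8 * X ^ 6"
    unfolding N_eq .
  have "R \<le> 2 * X + Y \<longleftrightarrow> R\<^sup>2 \<le> (2 * X + Y)\<^sup>2"
    using X Y R by (simp add: power2_le_iff_abs_le)
  also have "\<dots> \<longleftrightarrow> 0 \<le> ((2 * X + Y)\<^sup>2 - R\<^sup>2) * (1 + 8 * X ^ 3)"
    using Q_pos by (simp add: zero_le_mult_iff)
  also have "\<dots> \<longleftrightarrow> 0 \<le> - g * a"
    unfolding e_eq ..
  also have "\<dots> \<longleftrightarrow> g * b \<le> 0"
    using \<open>a < 0\<close> \<open>b < 0\<close> by (simp add: mult_le_0_iff zero_le_mult_iff)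
  finally show "R \<le> 2 * X + Y \<longleftrightarrow> 1 - 20 * X ^ 3 - 8 * X ^ 6 \<le> 0"
    unfolding N_eq .
qed

lemma leaf3_radicand:
  fixes X Y R :: real
  assumes X: "0 \<le> X" and Y: "0 \<le> Y" and R: "0 < R"
    and R2: "R\<^sup>2 = 1 + Y + Y\<^sup>2" and Y_eq: "Y * (1 + 8 * X ^ 3) = 4 * X * (1 - X ^ 3)"
  shows "-1 - Y + 2 * Y\<^sup>2 + (2 - 2 * Y ^ 3) / R = (2 * X + Y - R)\<^sup>2"
proof -
  have "(R * (1 + 2 * X))\<^sup>2 = (2 * X\<^sup>2 + 2 * X * Y + 1 + Y)\<^sup>2"
  proof -
    have "(R * (1 + 2 * X))\<^sup>2 - (2 * X\<^sup>2 + 2 * X * Y + 1 + Y)\<^sup>2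
        = 4 * X * (1 - X ^ 3) - Y * (1 + 8 * X ^ 3)"
      unfolding power_mult_distrib R2 by algebra
    then show ?thesis
      unfolding Y_eq by simp
  qed
  then have R_eq: "R * (1 + 2 * X) = 2 * X\<^sup>2 + 2 * X * Y + 1 + Y"
    using X Y R by (simp add: power2_eq_iff_nonneg)
  have "(2 - 2 * Y ^ 3) / R = 2 * (1 - Y) * R"
  proof -
    have "2 - 2 * Y ^ 3 = 2 * (1 - Y) * R\<^sup>2"
      unfolding R2 by algebra
    with R show ?thesis
      by (simp add: power2_eq_square)
  qed
  moreover have "-1 - Y + 2 * Y\<^sup>2 + 2 * (1 - Y) * R = (2 * X + Y - R)\<^sup>2"
    using R_eq R2 by algebra
  ultimately show ?thesis
    by simp
qed

lemma leaf3_half_square: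
  fixes u c s :: real
  assumes c2: "c\<^sup>2 = 1 - u ^ 6" and s: "s = 2 * u * c / sqrt (1 + 8 * u ^ 6)"
  defines "A \<equiv> (1/2) * sqrt (-1 - s^2 + 2 * s^4 + (2 - 2 * s^6) / sqrt (1 + s^2 + s^4))"
  shows "0 \<le> 1 - 20 * u ^ 6 - 8 * u ^ 12
           \<Longrightarrow> u\<^sup>2 = - (1/2) * s^2 + (1/2) * sqrt (1 + s^2 + s^4) - A"
    and "1 - 20 * u ^ 6 - 8 * u ^ 12 \<le> 0
           \<Longrightarrow> u\<^sup>2 = - (1/2) * s^2 + (1/2) * sqrt (1 + s^2 + s^4) + A"
proof -
  define X Y R where "X = u\<^sup>2" and "Y = s\<^sup>2" and "R = sqrt (1 + s^2 + s^4)"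
  have X3: "u ^ 6 = X ^ 3" and X6: "u ^ 12 = X ^ 6" and Y2: "s ^ 4 = Y\<^sup>2" and Y3: "s ^ 6 = Y ^ 3"
    by (simp_all add: X_def Y_def flip: power_mult)
  have "X ^ 3 \<le> 1"
    using c2 X3 by (metis diff_ge_0_iff_ge zero_le_power2)
  moreover have "0 \<le> X"
    by (simp add: X_def)
  ultimately have X: "0 \<le> X" "X \<le> 1"
    by (simp_all add: power_le_one_iff)
  have Y: "0 \<le> Y"
    by (simp add: Y_def)
  have R_eq: "R = sqrt (1 + Y + Y\<^sup>2)"
    by (simp add: R_def Y_def flip: power_mult)
  have R: "0 < R" and R2: "R\<^sup>2 = 1 + Y + Y\<^sup>2"
    unfolding R_eq using Y by (simp_all add: add_pos_nonneg)
  have Q: "0 < 1 + 8 * X ^ 3"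
    using X by (simp add: add_pos_nonneg)
  have Y_eq: "Y * (1 + 8 * X ^ 3) = 4 * X * (1 - X ^ 3)"
  proof -
    have "Y = 4 * X * c\<^sup>2 / (sqrt (1 + 8 * X ^ 3))\<^sup>2"
      unfolding Y_def X_def s X3 by (simp add: power_divide power_mult_distrib)
    then show ?thesis
      using Q by (simp add: c2 X3 field_simps)
  qed
  have "2 * A = \<bar>2 * X + Y - R\<bar>"
    using leaf3_radicand[OF X(1) Y R R2 Y_eq]
    by (simp add: A_def Y_def[symmetric] Y2 Y3 R_eq[symmetric])
  then show "0 \<le> 1 - 20 * u ^ 6 - 8 * u ^ 12 \<Longrightarrow> u\<^sup>2 = - (1/2) * s^2 + (1/2) * R - A"
    and "1 - 20 * u ^ 6 - 8 * u ^ 12 \<le> 0 \<Longrightarrow> u\<^sup>2 = - (1/2) * s^2 + (1/2) * R + A"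
    using leaf3_half_compare[OF X Y less_imp_le[OF R] R2 Y_eq]
    by (auto simp: X3 X6 X_def[symmetric] Y_def[symmetric])
qed

interpretation leaf3: leaf_basis 3
  by unfold_locales simp

lemma sleaf_3_duplication:
  fixes x :: real
  defines "u \<equiv> sleaf 3 (x / 2)" and "c \<equiv> leaf3.dsleaf (x / 2)"
  shows "sleaf 3 x = 2 * u * c / sqrt (1 + 8 * u ^ 6)"
    and "leaf3.dsleaf x = (1 - 20 * u ^ 6 - 8 * u ^ 12) / sqrt (1 + 8 * u ^ 6) ^ 3"
proof -
  note dup =
    leaf_ode_unique[OF _ leaf3.leaf_ode_sleaf leaf_ode_3_duplication[OF leaf3.leaf_ode_sleaf]]
  show "sleaf 3 x = 2 * u * c / sqrt (1 + 8 * u ^ 6)"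
    using fun_cong[OF dup(1), of x] by (simp add: u_def c_def)
  show "leaf3.dsleaf x = (1 - 20 * u ^ 6 - 8 * u ^ 12) / sqrt (1 + 8 * u ^ 6) ^ 3"
    using fun_cong[OF dup(2), of x] by (simp add: u_def)
qed

theorem mainTheorem14:
  fixes m :: int and l :: real
  defines "s \<equiv> sleaf 3 l"
  defines "A \<equiv> (1/2) * sqrt (-1 - s^2 + 2 * s^4 + (2 - 2 * s^6) / sqrt (1 + s^2 + s^4))"
  shows "(leaf_pi 3 / 2 * (4 * real_of_int m - 1) \<le> l \<and> l \<le> leaf_pi 3 / 2 * (4 * real_of_int m + 1)
            \<longrightarrow> (sleaf 3 (l / 2))^2 = - (1/2) * s^2 + (1/2) * sqrt (1 + s^2 + s^4) - A)
       \<and> (leaf_pi 3 / 2 * (4 * real_of_int m + 1) \<le> l \<and> l \<le> leaf_pi 3 / 2 * (4 * real_of_int m + 3)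
            \<longrightarrow> (sleaf 3 (l / 2))^2 = - (1/2) * s^2 + (1/2) * sqrt (1 + s^2 + s^4) + A)"
proof -
  define u where "u = sleaf 3 (l / 2)"
  define N where "N = 1 - 20 * u ^ 6 - 8 * u ^ 12"
  have half_square: "0 \<le> N \<Longrightarrow> u\<^sup>2 = - (1/2) * s^2 + (1/2) * sqrt (1 + s^2 + s^4) - A"
      "N \<le> 0 \<Longrightarrow> u\<^sup>2 = - (1/2) * s^2 + (1/2) * sqrt (1 + s^2 + s^4) + A"
    using leaf3_half_square[OF _ sleaf_3_duplication(1)[of l, folded s_def u_def]]
      leaf_ode_energy[OF _ leaf3.leaf_ode_sleaf, of "l / 2"]
    by (auto simp: A_def N_def u_def algebra_simps)
  have "0 < sqrt (1 + 8 * u ^ 6) ^ 3"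
    by (simp add: add_pos_nonneg)
  then have sign: "0 \<le> leaf3.dsleaf l \<longleftrightarrow> 0 \<le> N" "leaf3.dsleaf l \<le> 0 \<longleftrightarrow> N \<le> 0"
    unfolding sleaf_3_duplication(2)[of l, folded u_def] N_def
    by (simp_all add: zero_le_divide_iff divide_le_0_iff)
  have K: "leaf_pi 3 / 2 = leaf3.K"
    by (simp add: leaf3.K_def)
  show ?thesis
    unfolding K u_def[symmetric]
    using leaf3.dsleaf_nonneg[of m l] leaf3.dsleaf_nonpos[of m l] sign half_square by blast
qed

end
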